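(* Let $\mathbb{M}^2$ be a strictly convex normed plane, let $p,q\in\mathbb{M}^2$ be distinct points, and let $y$ be a point of the bisector $\mathrm{bis}(p,q)=\{z:\|z-p\|=\|z-q\|\}$. Then for every $\epsilon>0$, $\|y+\epsilon(y-p)-q\|<\|y+\epsilon(y-p)-p\|$.
   Context: $\mathbb{M}^2$ is $\mathbb{R}^2$ with a norm $\|\cdot\|$; it is strictly convex if its unit sphere contains no nondegenerate line segment. The paper phrases the hypothesis as $y\in Bi(p,q)$, where $Bi(p,q)\subseteq\mathrm{bis}(p,q)$ is a simple curve that can be chosen to pass through any given point of $\mathrm{bis}(p,q)$; hence the condition is that $y$ is a point of the bisector. *)

theory Defs
  imports "HOL-Analysis.Analysis"
begin

definition is_norm :: "(real^2 \<Rightarrow> real) \<Rightarrow> bool" where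
  "is_norm N \<longleftrightarrow>
     (\<forall>x. 0 \<le> N x) \<and> (\<forall>x. N x = 0 \<longleftrightarrow> x = 0) \<and>
     (\<forall>c x. N (c *\<^sub>R x) = \<bar>c\<bar> * N x) \<and>
     (\<forall>x y. N (x + y) \<le> N x + N y)"

definition strictly_convex_norm :: "(real^2 \<Rightarrow> real) \<Rightarrow> bool" where
  "strictly_convex_norm N \<longleftrightarrow>
     \<not> (\<exists>a b. a \<noteq> b \<and> (\<forall>z\<in>closed_segment a b. N z = 1))"

definition bisector :: "(real^2 \<Rightarrow> real) \<Rightarrow> real^2 \<Rightarrow> real^2 \<Rightarrow> (real^2) set" where
  "bisector N p q = {z. N (z - p) = N (z - q)}"

end

theory Submission
  imports Defs
begin

text \<open>With z = y + \<epsilon>(y - p) we have z - q = (y - q) + \<epsilon>(y - p) and z - p = (1 + \<epsilon>)(y - p),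
  so the claim is a strict triangle inequality. Equality N(a + b) = N a + N b in the triangle
  inequality forces N(\<alpha>a + \<beta>b) = \<alpha> N a + \<beta> N b for all \<alpha>, \<beta> \<ge> 0; hence the segment between
  the unit vectors of a and b lies on the unit sphere, and strict convexity makes these unit
  vectors equal. For a = y - q and b = \<epsilon>(y - p) both unit vectors are obtained by dividing by
  N(y - q) = N(y - p), so their equality would mean p = q.\<close>

lemma
  assumes "is_norm N"
  shows is_norm_nonneg: "0 \<le> N x"
    and is_norm_eq_0_iff: "N x = 0 \<longleftrightarrow> x = 0"
    and is_norm_scaleR: "N (c *\<^sub>R x) = \<bar>c\<bar> * N x"
    and is_norm_triangle: "N (x + y) \<le> N x + N y"
  using assms unfolding is_norm_def by auto

lemma is_norm_pos:
  assumes "is_norm N" "x \<noteq> 0"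
  shows "0 < N x"
  using is_norm_nonneg[OF assms(1), of x] is_norm_eq_0_iff[OF assms(1), of x] assms(2) by simp

lemma is_norm_triangle_eq_scaled:
  assumes N: "is_norm N" and eq: "N (a + b) = N a + N b" and "0 \<le> \<alpha>" "0 \<le> \<beta>"
  shows "N (\<alpha> *\<^sub>R a + \<beta> *\<^sub>R b) = \<alpha> * N a + \<beta> * N b"
proof -
  have ordered: "N (\<alpha> *\<^sub>R a + \<beta> *\<^sub>R b) = \<alpha> * N a + \<beta> * N b"
    if eq: "N (a + b) = N a + N b" and "0 \<le> \<beta>" "\<beta> \<le> \<alpha>" for a b \<alpha> \<beta>
  proof (rule antisym)
    have "N (\<alpha> *\<^sub>R a + \<beta> *\<^sub>R b) \<le> N (\<alpha> *\<^sub>R a) + N (\<beta> *\<^sub>R b)"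
      by (rule is_norm_triangle[OF N])
    also have "\<dots> = \<alpha> * N a + \<beta> * N b"
      using is_norm_scaleR[OF N] that(2,3) by simp
    finally show "N (\<alpha> *\<^sub>R a + \<beta> *\<^sub>R b) \<le> \<alpha> * N a + \<beta> * N b" .
    have "\<alpha> * N (a + b) = N ((\<alpha> *\<^sub>R a + \<beta> *\<^sub>R b) + (\<alpha> - \<beta>) *\<^sub>R b)"
      using is_norm_scaleR[OF N, of \<alpha> "a + b"] that(2,3) by (simp add: algebra_simps)
    also have "\<dots> \<le> N (\<alpha> *\<^sub>R a + \<beta> *\<^sub>R b) + N ((\<alpha> - \<beta>) *\<^sub>R b)"
      by (rule is_norm_triangle[OF N])
    also have "\<dots> = N (\<alpha> *\<^sub>R a + \<beta> *\<^sub>R b) + (\<alpha> - \<beta>) * N b"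
      using is_norm_scaleR[OF N, of "\<alpha> - \<beta>" b] that(3) by simp
    finally show "\<alpha> * N a + \<beta> * N b \<le> N (\<alpha> *\<^sub>R a + \<beta> *\<^sub>R b)"
      using eq by (simp add: algebra_simps)
  qed
  show ?thesis
  proof (cases "\<beta> \<le> \<alpha>")
    case True
    then show ?thesis using ordered[OF eq] assms(4) by blast
  next
    case False
    have "N (b + a) = N b + N a" using eq by (simp add: add.commute)
    then have "N (\<beta> *\<^sub>R b + \<alpha> *\<^sub>R a) = \<beta> * N b + \<alpha> * N a"
      using ordered[where a = b and b = a and \<alpha> = \<beta> and \<beta> = \<alpha>] False assms(3) by simp
    then show ?thesis by (simp add: add.commute)
  qed
qed

lemma strictly_convex_norm_triangle_lt:
  assumes N: "is_norm N" and sc: "strictly_convex_norm N"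
    and "a \<noteq> 0" "b \<noteq> 0" and ne: "(1 / N a) *\<^sub>R a \<noteq> (1 / N b) *\<^sub>R b"
  shows "N (a + b) < N a + N b"
proof (rule ccontr)
  assume "\<not> N (a + b) < N a + N b"
  with is_norm_triangle[OF N] have eq: "N (a + b) = N a + N b" by (meson order_le_less)
  have pos: "0 < N a" "0 < N b" using is_norm_pos[OF N] assms(3,4) by auto
  have "N z = 1" if z_in: "z \<in> closed_segment ((1 / N a) *\<^sub>R a) ((1 / N b) *\<^sub>R b)" for z
  proof -
    obtain t where t: "0 \<le> t" "t \<le> 1"
      and "z = (1 - t) *\<^sub>R (1 / N a) *\<^sub>R a + t *\<^sub>R (1 / N b) *\<^sub>R b"
      using z_in unfolding in_segment by blast
    then have z: "z = ((1 - t) / N a) *\<^sub>R a + (t / N b) *\<^sub>R b" by simp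
    show ?thesis
      using is_norm_triangle_eq_scaled[OF N eq, of "(1 - t) / N a" "t / N b"] t pos
      by (simp add: z)
  qed
  with ne sc show False unfolding strictly_convex_norm_def by blast
qed

theorem lemma6p1:
  fixes N :: "real^2 \<Rightarrow> real" and p q y :: "real^2" and \<epsilon> :: real
  assumes "is_norm N" and "strictly_convex_norm N"
    and "p \<noteq> q" and "y \<in> bisector N p q" and "\<epsilon> > 0"
  shows "N (y + \<epsilon> *\<^sub>R (y - p) - q) < N (y + \<epsilon> *\<^sub>R (y - p) - p)"
proof -
  note N = assms(1)
  have eq_dist: "N (y - q) = N (y - p)" using assms(4) by (simp add: bisector_def)
  have "y \<noteq> p" "y \<noteq> q"
    using eq_dist assms(3) is_norm_eq_0_iff[OF N, of "y - p"] is_norm_eq_0_iff[OF N, of "y - q"]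
    by auto
  then have r: "0 < N (y - p)" using is_norm_pos[OF N] by simp
  have scaled: "N (\<epsilon> *\<^sub>R (y - p)) = \<epsilon> * N (y - p)"
    using is_norm_scaleR[OF N] assms(5) by simp
  have "(1 / N (y - q)) *\<^sub>R (y - q) \<noteq> (1 / N (\<epsilon> *\<^sub>R (y - p))) *\<^sub>R \<epsilon> *\<^sub>R (y - p)"
    using scaled eq_dist r assms(3,5) by simp
  then have "N ((y - q) + \<epsilon> *\<^sub>R (y - p)) < N (y - q) + N (\<epsilon> *\<^sub>R (y - p))"
    using strictly_convex_norm_triangle_lt[OF N assms(2)] \<open>y \<noteq> p\<close> \<open>y \<noteq> q\<close> assms(5) by simp
  also have "\<dots> = N ((1 + \<epsilon>) *\<^sub>R (y - p))"
    using is_norm_scaleR[OF N, of "1 + \<epsilon>"] scaled eq_dist assms(5) by (simp add: distrib_right)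
  finally show ?thesis by (simp add: algebra_simps)
qed

end
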